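(* Let $N\ge2$, $R>0$, let $g:[0,R]\to(0,\infty)$ be smooth, let $A,B,p,q$ be positive constants with $A\neq B$, and let $\kappa\in(0,1)$, all independent of $\epsilon$. For $\epsilon>0$ let $U_\epsilon\in C^1([0,R])\cap C^\infty((0,R))$ be the unique solution of problem (N* ) described in the context, and set $I_p=\int_0^R s^{N-1}e^{pU_\epsilon(s)}ds$, $I_q=\int_0^R s^{N-1}e^{-qU_\epsilon(s)}ds$, $$\Lambda_{1,\epsilon}(R)=\frac{\epsilon^2}{2}\int_0^R\frac{(N-2)g(s)+sg'(s)}{R^N}s^{N-1}U_\epsilon'(s)^2ds,$$ $$\Lambda_{2,\epsilon}(R)=-\frac{\epsilon^2}{2}g(\epsilon^\kappa)U_\epsilon'(\epsilon^\kappa)^2+\frac{\epsilon^2}{2}\int_{\epsilon^\kappa}^R\frac{2(N-1)g(s)+sg'(s)}{s}U_\epsilon'(s)^2ds.$$ Then $$\frac{R^N}{N}\Big(\frac{Ae^{pU_\epsilon(R)}}{pI_p}+\frac{Be^{-qU_\epsilon(R)}}{qI_q}\Big)=\frac{R^2(A-B)^2}{2N^2\epsilon^2g(R)}+\frac Ap+\frac Bq+\Lambda_{1,\epsilon}(R),$$ and $$\frac{R^N}{N}\Big(\frac{Ae^{pU_\epsilon(\epsilon^\kappa)}}{pI_p}+\frac{Be^{-qU_\epsilon(\epsilon^\kappa)}}{qI_q}\Big)=\frac Ap+\frac Bq+\Lambda_{1,\epsilon}(R)-\Lambda_{2,\epsilon}(R).$$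
   Context: Problem (N* ): for $\epsilon>0$, find $U_\epsilon\in C^1([0,R])\cap C^\infty((0,R))$ such that for $r\in(0,R)$ $$\epsilon^2 g(r)\Big[U_\epsilon''(r)+\Big(\frac{N-1}{r}+\frac{g'(r)}{g(r)}\Big)U_\epsilon'(r)\Big]=\frac{R^N}{N}\Big(\frac{Ae^{pU_\epsilon(r)}}{\int_0^R s^{N-1}e^{pU_\epsilon(s)}ds}-\frac{Be^{-qU_\epsilon(r)}}{\int_0^R s^{N-1}e^{-qU_\epsilon(s)}ds}\Big),$$ together with $\int_0^R s^{N-1}U_\epsilon(s)\,ds=0$, $U_\epsilon'(0)=0$ and $U_\epsilon'(R)=\frac{R(A-B)}{\epsilon^2Ng(R)}$; it has a unique solution. Integrals $\int_a^b$ with $a>b$ are understood as $-\int_b^a$. *)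

theory Defs
  imports "HOL-Analysis.Analysis"
begin

definition C_inf_on :: "real set \<Rightarrow> (real \<Rightarrow> real) \<Rightarrow> bool" where
  "C_inf_on S f \<longleftrightarrow> (\<exists>D. D 0 = f \<and>
      (\<forall>n. \<forall>x\<in>S. (D n has_real_derivative D (Suc n) x) (at x within S)))"

end

theory Submission
  imports Defs
begin

text \<open>Along the solution, F = R^N/N (A e^{pU}/(p I_p) + B e^{-qU}/(q I_q)) is a primitive of the
  right-hand side of the equation, so F' is the left-hand side times U'. Hence the energy
  E = F - \<epsilon>^2/2 g U'^2 satisfies E' = \<epsilon>^2/2 (2(N-1)g + s g')/s U'^2, and
  (s^N E)' = N s^{N-1} F + \<epsilon>^2/2 ((N-2)g + s g') s^{N-1} U'^2 (Pohozaev).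
  Integrating the latter over [0,R], where the factor s^N kills the boundary term at 0 and the
  normalisation by I_p, I_q makes the integral of s^{N-1} F equal to R^N/N (A/p + B/q), and
  inserting the Neumann condition at R gives the first formula; integrating E' over
  [\<epsilon>^\<kappa>, R] gives the second.\<close>

lemma integral_power_mult_exp_pos:
  fixes V :: "real \<Rightarrow> real"
  assumes "0 < R" and "continuous_on {0..R} V"
  shows "0 < integral {0..R} (\<lambda>s. s ^ k * exp (V s))"
proof -
  have "integral {0..R} (\<lambda>_. 0) < integral {0..R} (\<lambda>s. s ^ k * exp (V s))"
    using assms by (intro integral_less_real) (auto intro!: continuous_intros)
  then show ?thesis by simp
qed

lemma normalized_exp_potential_has_real_derivative:
  fixes U :: "real \<Rightarrow> real"
  assumes "(U has_real_derivative Ud) (at r)"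
    and "p \<noteq> 0" and "q \<noteq> 0" and "Ip \<noteq> 0" and "Iq \<noteq> 0"
  shows "((\<lambda>s. C * (A * exp (p * U s) / (p * Ip) + B * exp (- q * U s) / (q * Iq)))
           has_real_derivative C * (A * exp (p * U r) / Ip - B * exp (- q * U r) / Iq) * Ud) (at r)"
  using assms by (auto intro!: derivative_eq_intros simp: field_simps)

lemma normalized_exp_potential_has_integral:
  fixes U :: "real \<Rightarrow> real" and k :: nat and R p q A B C :: real
  assumes "0 < R" and "continuous_on {0..R} U"
  defines "Ip \<equiv> integral {0..R} (\<lambda>s. s ^ k * exp (p * U s))"
    and "Iq \<equiv> integral {0..R} (\<lambda>s. s ^ k * exp (- q * U s))"
  shows "((\<lambda>s. s ^ k * (C * (A * exp (p * U s) / (p * Ip) + B * exp (- q * U s) / (q * Iq))))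
           has_integral C * (A / p + B / q)) {0..R}"
proof -
  have "((\<lambda>s. s ^ k * exp (p * U s) * (C * A / (p * Ip)) + s ^ k * exp (- q * U s) * (C * B / (q * Iq)))
      has_integral Ip * (C * A / (p * Ip)) + Iq * (C * B / (q * Iq))) {0..R}"
    unfolding Ip_def Iq_def using assms(2)
    by (intro has_integral_add has_integral_mult_left integrable_integral
        integrable_continuous_interval continuous_intros)
  moreover have "0 < Ip" and "0 < Iq"
    unfolding Ip_def Iq_def using assms(1,2)
    by (auto intro!: integral_power_mult_exp_pos continuous_intros)
  ultimately show ?thesis
    by (simp add: field_simps)
qed

lemma radial_energy_has_real_derivative:
  fixes F g gd Ud Udd :: "real \<Rightarrow> real" and c n r :: real
  assumes F: "(F has_real_derivative c * g r * (Udd r + ((n - 1) / r + gd r / g r) * Ud r) * Ud r) (at r)"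
    and g: "(g has_real_derivative gd r) (at r)"
    and Ud: "(Ud has_real_derivative Udd r) (at r)"
    and "r \<noteq> 0" and "g r \<noteq> 0"
  shows "((\<lambda>s. F s - c / 2 * g s * (Ud s)\<^sup>2) has_real_derivative
           c / 2 * ((2 * (n - 1) * g r + r * gd r) / r * (Ud r)\<^sup>2)) (at r)"
proof -
  have "((\<lambda>s. F s - c / 2 * g s * (Ud s)\<^sup>2) has_real_derivative
      c * g r * (Udd r + ((n - 1) / r + gd r / g r) * Ud r) * Ud r
      - c / 2 * (gd r * (Ud r)\<^sup>2 + g r * (2 * Ud r * Udd r))) (at r)"
    by (auto intro!: derivative_eq_intros F g Ud simp: field_simps power2_eq_square)
  moreover have "c * g r * (Udd r + ((n - 1) / r + gd r / g r) * Ud r) * Ud r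
      - c / 2 * (gd r * (Ud r)\<^sup>2 + g r * (2 * Ud r * Udd r))
      = c / 2 * ((2 * (n - 1) * g r + r * gd r) / r * (Ud r)\<^sup>2)"
    using assms(4,5) by (simp add: field_simps power2_eq_square)
  ultimately show ?thesis by simp
qed

lemma radial_pohozaev_has_real_derivative:
  fixes F g gd Ud Udd :: "real \<Rightarrow> real" and c r :: real and N :: nat
  assumes F: "(F has_real_derivative
                c * g r * (Udd r + ((real N - 1) / r + gd r / g r) * Ud r) * Ud r) (at r)"
    and g: "(g has_real_derivative gd r) (at r)"
    and Ud: "(Ud has_real_derivative Udd r) (at r)"
    and "r \<noteq> 0" and "g r \<noteq> 0" and "N \<ge> 1"
  shows "((\<lambda>s. s ^ N * (F s - c / 2 * g s * (Ud s)\<^sup>2)) has_real_derivative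
           real N * r ^ (N - 1) * F r
           + c / 2 * (((real N - 2) * g r + r * gd r) * r ^ (N - 1) * (Ud r)\<^sup>2)) (at r)"
proof -
  have "((\<lambda>s. F s - c / 2 * g s * (Ud s)\<^sup>2) has_real_derivative
      c / 2 * ((2 * (real N - 1) * g r + r * gd r) / r * (Ud r)\<^sup>2)) (at r)"
    by (rule radial_energy_has_real_derivative[where Udd = Udd]) (use assms in auto)
  from DERIV_mult[OF DERIV_pow this] show ?thesis
  proof (rule DERIV_cong)
    have "r ^ N = r * r ^ (N - 1)"
      using \<open>N \<ge> 1\<close> by (cases N) auto
    then show "real N * r ^ (N - Suc 0) * (F r - c / 2 * g r * (Ud r)\<^sup>2)
        + c / 2 * ((2 * (real N - 1) * g r + r * gd r) / r * (Ud r)\<^sup>2) * r ^ N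
        = real N * r ^ (N - 1) * F r
          + c / 2 * (((real N - 2) * g r + r * gd r) * r ^ (N - 1) * (Ud r)\<^sup>2)"
      using assms(4) by (simp add: field_simps power2_eq_square)
  qed
qed

lemma radial_energy_identity:
  fixes F g gd Ud Udd :: "real \<Rightarrow> real" and a b c n :: real
  assumes "0 < a" and "a \<le> b"
    and cont: "continuous_on {a..b} F" "continuous_on {a..b} g" "continuous_on {a..b} Ud"
    and F: "\<And>r. r \<in> {a<..<b} \<Longrightarrow> (F has_real_derivative
                c * g r * (Udd r + ((n - 1) / r + gd r / g r) * Ud r) * Ud r) (at r)"
    and g: "\<And>r. r \<in> {a<..<b} \<Longrightarrow> (g has_real_derivative gd r) (at r)"
    and Ud: "\<And>r. r \<in> {a<..<b} \<Longrightarrow> (Ud has_real_derivative Udd r) (at r)"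
    and g_nz: "\<And>r. r \<in> {a<..<b} \<Longrightarrow> g r \<noteq> 0"
  shows "F b - c / 2 * g b * (Ud b)\<^sup>2 = F a - c / 2 * g a * (Ud a)\<^sup>2
           + c / 2 * integral {a..b} (\<lambda>s. (2 * (n - 1) * g s + s * gd s) / s * (Ud s)\<^sup>2)"
proof -
  have "((\<lambda>s. c / 2 * ((2 * (n - 1) * g s + s * gd s) / s * (Ud s)\<^sup>2)) has_integral
      (F b - c / 2 * g b * (Ud b)\<^sup>2) - (F a - c / 2 * g a * (Ud a)\<^sup>2)) {a..b}"
  proof (intro fundamental_theorem_of_calculus_interior continuous_intros cont \<open>a \<le> b\<close>)
    fix r assume r: "r \<in> {a<..<b}"
    have "((\<lambda>s. F s - c / 2 * g s * (Ud s)\<^sup>2) has_real_derivative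
        c / 2 * ((2 * (n - 1) * g r + r * gd r) / r * (Ud r)\<^sup>2)) (at r)"
      by (rule radial_energy_has_real_derivative[where Udd = Udd]) (use F g Ud g_nz r \<open>0 < a\<close> in auto)
    then show "((\<lambda>s. F s - c / 2 * g s * (Ud s)\<^sup>2) has_vector_derivative
        c / 2 * ((2 * (n - 1) * g r + r * gd r) / r * (Ud r)\<^sup>2)) (at r)"
      by (simp add: has_real_derivative_iff_has_vector_derivative)
  qed
  then have "c / 2 * integral {a..b} (\<lambda>s. (2 * (n - 1) * g s + s * gd s) / s * (Ud s)\<^sup>2)
      = (F b - c / 2 * g b * (Ud b)\<^sup>2) - (F a - c / 2 * g a * (Ud a)\<^sup>2)"
    by (simp only: integral_mult_right[symmetric] integral_unique)
  then show ?thesis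
    by linarith
qed

lemma radial_pohozaev_identity:
  fixes F g gd Ud Udd :: "real \<Rightarrow> real" and R c I :: real and N :: nat
  assumes "0 < R" and "N \<ge> 1"
    and cont: "continuous_on {0..R} F" "continuous_on {0..R} g" "continuous_on {0..R} Ud"
    and F: "\<And>r. r \<in> {0<..<R} \<Longrightarrow> (F has_real_derivative
                c * g r * (Udd r + ((real N - 1) / r + gd r / g r) * Ud r) * Ud r) (at r)"
    and g: "\<And>r. r \<in> {0<..<R} \<Longrightarrow> (g has_real_derivative gd r) (at r)"
    and Ud: "\<And>r. r \<in> {0<..<R} \<Longrightarrow> (Ud has_real_derivative Udd r) (at r)"
    and g_nz: "\<And>r. r \<in> {0<..<R} \<Longrightarrow> g r \<noteq> 0"
    and F_int: "((\<lambda>s. s ^ (N - 1) * F s) has_integral I) {0..R}"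
  shows "F R - c / 2 * g R * (Ud R)\<^sup>2 = real N * I / R ^ N
           + c / 2 * integral {0..R} (\<lambda>s. ((real N - 2) * g s + s * gd s) / R ^ N * s ^ (N - 1) * (Ud s)\<^sup>2)"
proof -
  have ftc: "((\<lambda>s. real N * s ^ (N - 1) * F s
      + c / 2 * (((real N - 2) * g s + s * gd s) * s ^ (N - 1) * (Ud s)\<^sup>2)) has_integral
      R ^ N * (F R - c / 2 * g R * (Ud R)\<^sup>2) - 0 ^ N * (F 0 - c / 2 * g 0 * (Ud 0)\<^sup>2)) {0..R}"
  proof (intro fundamental_theorem_of_calculus_interior continuous_intros cont)
    show "0 \<le> R" using \<open>0 < R\<close> by simp
    fix r assume r: "r \<in> {0<..<R}"
    have "((\<lambda>s. s ^ N * (F s - c / 2 * g s * (Ud s)\<^sup>2)) has_real_derivative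
        real N * r ^ (N - 1) * F r
        + c / 2 * (((real N - 2) * g r + r * gd r) * r ^ (N - 1) * (Ud r)\<^sup>2)) (at r)"
      by (rule radial_pohozaev_has_real_derivative[where Udd = Udd]) (use F g Ud g_nz r \<open>N \<ge> 1\<close> in auto)
    then show "((\<lambda>s. s ^ N * (F s - c / 2 * g s * (Ud s)\<^sup>2)) has_vector_derivative
        real N * r ^ (N - 1) * F r
        + c / 2 * (((real N - 2) * g r + r * gd r) * r ^ (N - 1) * (Ud r)\<^sup>2)) (at r)"
      by (simp add: has_real_derivative_iff_has_vector_derivative)
  qed
  have "(0::real) ^ N = 0"
    using \<open>N \<ge> 1\<close> by simp
  then have "((\<lambda>s. c / 2 * (((real N - 2) * g s + s * gd s) * s ^ (N - 1) * (Ud s)\<^sup>2))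
      has_integral R ^ N * (F R - c / 2 * g R * (Ud R)\<^sup>2) - real N * I) {0..R}"
    using has_integral_diff[OF ftc has_integral_mult_right[OF F_int, of "real N"]] by (simp only: add_diff_cancel_left' mult_zero_left diff_zero mult.assoc)
  then have "c / 2 * integral {0..R} (\<lambda>s. ((real N - 2) * g s + s * gd s) * s ^ (N - 1) * (Ud s)\<^sup>2)
      = R ^ N * (F R - c / 2 * g R * (Ud R)\<^sup>2) - real N * I"
    by (simp only: integral_mult_right[symmetric] integral_unique)
  moreover have "integral {0..R} (\<lambda>s. ((real N - 2) * g s + s * gd s) / R ^ N * s ^ (N - 1) * (Ud s)\<^sup>2)
      = integral {0..R} (\<lambda>s. ((real N - 2) * g s + s * gd s) * s ^ (N - 1) * (Ud s)\<^sup>2) / R ^ N"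
    by (simp only: integral_divide[symmetric]) (rule integral_cong, simp)
  ultimately show ?thesis
    using \<open>0 < R\<close> by (simp add: field_simps)
qed

theorem lemma3p6:
  fixes N :: nat and R \<epsilon> \<kappa> A B p q :: real
    and g gd U Ud Udd :: "real \<Rightarrow> real"
  assumes N: "N \<ge> 2" and R: "R > 0"
    and g_smooth: "C_inf_on {0..R} g"
    and g_pos: "\<forall>x\<in>{0..R}. g x > 0"
    and gd: "\<forall>x\<in>{0..R}. (g has_real_derivative gd x) (at x within {0..R})"
    and A: "A > 0" and B: "B > 0" and p: "p > 0" and q: "q > 0" and AB: "A \<noteq> B"
    and \<kappa>: "0 < \<kappa>" "\<kappa> < 1"
    and \<epsilon>: "\<epsilon> > 0" and \<epsilon>\<kappa>: "\<epsilon> powr \<kappa> \<le> R"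
    \<comment> \<open>U is C^1 on [0,R] with derivative Ud, and C^\<infinity> on (0,R) with second derivative Udd\<close>
    and U_C1: "\<forall>x\<in>{0..R}. (U has_real_derivative Ud x) (at x within {0..R})"
    and Ud_cont: "continuous_on {0..R} Ud"
    and U_smooth: "C_inf_on {0<..<R} U"
    and Udd: "\<forall>x\<in>{0<..<R}. (Ud has_real_derivative Udd x) (at x)"
    \<comment> \<open>U solves problem (N*)\<close>
    and eq: "\<forall>r\<in>{0<..<R}.
        \<epsilon>\<^sup>2 * g r * (Udd r + ((real N - 1) / r + gd r / g r) * Ud r)
        = R ^ N / real N *
          (A * exp (p * U r) / integral {0..R} (\<lambda>s. s ^ (N - 1) * exp (p * U s))
         - B * exp (- q * U r) / integral {0..R} (\<lambda>s. s ^ (N - 1) * exp (- q * U s)))"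
    and mean0: "integral {0..R} (\<lambda>s. s ^ (N - 1) * U s) = 0"
    and bc0: "Ud 0 = 0"
    and bcR: "Ud R = R * (A - B) / (\<epsilon>\<^sup>2 * real N * g R)"
  shows
   "let Ip = integral {0..R} (\<lambda>s. s ^ (N - 1) * exp (p * U s));
        Iq = integral {0..R} (\<lambda>s. s ^ (N - 1) * exp (- q * U s));
        \<Lambda>1 = \<epsilon>\<^sup>2 / 2 * integral {0..R}
               (\<lambda>s. ((real N - 2) * g s + s * gd s) / R ^ N * s ^ (N - 1) * (Ud s)\<^sup>2);
        \<Lambda>2 = - \<epsilon>\<^sup>2 / 2 * g (\<epsilon> powr \<kappa>) * (Ud (\<epsilon> powr \<kappa>))\<^sup>2
             + \<epsilon>\<^sup>2 / 2 * integral {\<epsilon> powr \<kappa>..R}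
               (\<lambda>s. (2 * (real N - 1) * g s + s * gd s) / s * (Ud s)\<^sup>2)
    in R ^ N / real N * (A * exp (p * U R) / (p * Ip) + B * exp (- q * U R) / (q * Iq))
         = R\<^sup>2 * (A - B)\<^sup>2 / (2 * (real N)\<^sup>2 * \<epsilon>\<^sup>2 * g R) + A / p + B / q + \<Lambda>1
     \<and> R ^ N / real N * (A * exp (p * U (\<epsilon> powr \<kappa>)) / (p * Ip)
                         + B * exp (- q * U (\<epsilon> powr \<kappa>)) / (q * Iq))
         = A / p + B / q + \<Lambda>1 - \<Lambda>2"
proof -
  define Ip where "Ip = integral {0..R} (\<lambda>s. s ^ (N - 1) * exp (p * U s))"
  define Iq where "Iq = integral {0..R} (\<lambda>s. s ^ (N - 1) * exp (- q * U s))"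
  define F where
    "F s = R ^ N / real N * (A * exp (p * U s) / (p * Ip) + B * exp (- q * U s) / (q * Iq))" for s
  define a where "a = \<epsilon> powr \<kappa>"
  have U': "(U has_real_derivative Ud r) (at r)" and g': "(g has_real_derivative gd r) (at r)"
    if "r \<in> {0<..<R}" for r
    using U_C1 gd that by (metis at_within_Icc_at atLeastAtMost_iff greaterThanLessThan_iff less_eq_real_def)+
  have U_cont: "continuous_on {0..R} U" and g_cont: "continuous_on {0..R} g"
    using U_C1 gd by (auto intro: DERIV_continuous_on)
  have g_nz: "g r \<noteq> 0" if "r \<in> {0..R}" for r
    using g_pos that by fastforce
  have Ip_pos: "0 < Ip" and Iq_pos: "0 < Iq"
    unfolding Ip_def Iq_def using R U_cont
    by (auto intro!: integral_power_mult_exp_pos continuous_intros)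
  have F_cont: "continuous_on {0..R} F"
    unfolding F_def using Ip_pos Iq_pos p q N U_cont by (auto intro!: continuous_intros)
  have F': "(F has_real_derivative
      \<epsilon>\<^sup>2 * g r * (Udd r + ((real N - 1) / r + gd r / g r) * Ud r) * Ud r) (at r)"
    if r: "r \<in> {0<..<R}" for r
  proof -
    have "\<epsilon>\<^sup>2 * g r * (Udd r + ((real N - 1) / r + gd r / g r) * Ud r)
        = R ^ N / real N * (A * exp (p * U r) / Ip - B * exp (- q * U r) / Iq)"
      using eq r unfolding Ip_def Iq_def by blast
    then show ?thesis
      unfolding F_def using p q Ip_pos Iq_pos
      by (simp only:) (intro normalized_exp_potential_has_real_derivative U'[OF r]; simp)
  qed
  have F_int: "((\<lambda>s. s ^ (N - 1) * F s) has_integral R ^ N / real N * (A / p + B / q)) {0..R}"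
    unfolding F_def Ip_def Iq_def using R U_cont by (rule normalized_exp_potential_has_integral)
  have pohozaev: "F R - \<epsilon>\<^sup>2 / 2 * g R * (Ud R)\<^sup>2 = A / p + B / q
      + \<epsilon>\<^sup>2 / 2 * integral {0..R}
          (\<lambda>s. ((real N - 2) * g s + s * gd s) / R ^ N * s ^ (N - 1) * (Ud s)\<^sup>2)"
    using radial_pohozaev_identity[where Udd = Udd, OF R _ F_cont g_cont Ud_cont F' g' _ g_nz F_int]
      Udd N R by auto
  have a_pos: "0 < a" and a_le: "a \<le> R"
    using \<epsilon> \<epsilon>\<kappa> by (simp_all add: a_def)
  have energy: "F R - \<epsilon>\<^sup>2 / 2 * g R * (Ud R)\<^sup>2 = F a - \<epsilon>\<^sup>2 / 2 * g a * (Ud a)\<^sup>2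
      + \<epsilon>\<^sup>2 / 2 * integral {a..R} (\<lambda>s. (2 * (real N - 1) * g s + s * gd s) / s * (Ud s)\<^sup>2)"
    using a_pos a_le F_cont g_cont Ud_cont F' g' Udd g_nz
    by (intro radial_energy_identity[where Udd = Udd]) (auto intro: continuous_on_subset)
  have Neumann: "\<epsilon>\<^sup>2 / 2 * g R * (Ud R)\<^sup>2 = R\<^sup>2 * (A - B)\<^sup>2 / (2 * (real N)\<^sup>2 * \<epsilon>\<^sup>2 * g R)"
    using g_nz[of R] R \<epsilon> N unfolding bcR by (simp add: field_simps power2_eq_square)
  from pohozaev energy Neumann show ?thesis
    unfolding Let_def Ip_def[symmetric] Iq_def[symmetric] F_def[symmetric] a_def[symmetric]
    by simp
qed

end
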